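(* Consider the one-hidden-layer ReLU network setting below, trained by gradient descent with Polyak's momentum with step size $\eta>0$ and momentum parameter $\beta\in[0,1]$. Fix $R>0$ and $t\ge0$, and assume $\|w^{(r)}_s-w^{(r)}_0\|\le R$ for all $r\in[m]$ and all $s\in\{0,1,\dots,t+1\}$. Let $\xi_s:=u_s-y\in\mathbb{R}^n$ and define $$\iota_t:=\eta(H_0-H_t)\xi_t,\qquad \phi_t:=\xi_{t+1}-(1+\beta)\xi_t+\beta\xi_{t-1}+\eta H_t\xi_t,$$ so that $\begin{bmatrix}\xi_{t+1}\\ \xi_t\end{bmatrix}=\begin{bmatrix}(1+\beta)I_n-\eta H_0&-\beta I_n\\ I_n&0\end{bmatrix}\begin{bmatrix}\xi_t\\ \xi_{t-1}\end{bmatrix}+\begin{bmatrix}\phi_t+\iota_t\\0\end{bmatrix}$. Then for every $i\in[n]$, $$|\phi_t[i]|\le\frac{2\eta\sqrt n\,|S_i^\perp|}{m}\Big(\|u_t-y\|+\beta\sum_{s=0}^{t-1}\beta^{t-1-s}\|u_s-y\|\Big).$$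
   Context: Data $x_1,\dots,x_n\in\mathbb{R}^d$ with $\|x_i\|\le1$, labels $y\in\mathbb{R}^n$. Network $\mathcal N_W(x)=\frac{1}{\sqrt m}\sum_{r=1}^m a_r\sigma(\langle w^{(r)},x\rangle)$ with $\sigma(z)=z\mathbb{1}\{z\ge0\}$, fixed $a_r\in\{-1,1\}$, trainable $W=\{w^{(r)}\}_{r=1}^m\subset\mathbb{R}^d$. Loss $\ell(W)=\frac12\sum_i(y_i-\mathcal N_W(x_i))^2$, subgradient $\frac{\partial\ell(W)}{\partial w^{(r)}}:=\frac1{\sqrt m}\sum_{i=1}^n(\mathcal N_W(x_i)-y_i)a_r\mathbb{1}\{\langle w^{(r)},x_i\rangle\ge0\}x_i$. Gradient descent with Polyak's momentum: $w^{(r)}_{-1}:=w^{(r)}_0$, $w^{(r)}_{t+1}=w^{(r)}_t-\eta\frac{\partial\ell(W_t)}{\partial w^{(r)}_t}+\beta(w^{(r)}_t-w^{(r)}_{t-1})$. $u_t\in\mathbb{R}^n$ has entries $u_t[i]=\mathcal N_{W_t}(x_i)$. $H_t\in\mathbb{R}^{n\times n}$ has entries $(H_t)_{ij}=\frac1m\sum_{r=1}^m x_i^\top x_j\mathbb{1}\{\langle w^{(r)}_t,x_i\rangle\ge0\ \&\ \langle w^{(r)}_t,x_j\rangle\ge0\}$. For $i\in[n]$, $r\in[m]$, $A_{ir}$ is the event that there exists $w$ with $\|w-w^{(r)}_0\|\le R$ and $\mathbb{1}\{x_i^\top w^{(r)}_0\ge0\}\ne\mathbb{1}\{x_i^\top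 w\ge0\}$; $S_i:=\{r\in[m]:A_{ir}\text{ does not hold}\}$ and $S_i^\perp:=[m]\setminus S_i$. *)

theory Defs
  imports "HOL-Analysis.Analysis"
begin

text \<open>Data points are indexed by i < n, neurons by r < m. Weights W :: nat => 'a
  (neuron r has weight vector W r in the Euclidean space 'a = R^d).\<close>

definition relu :: "real \<Rightarrow> real" where
  "relu z = z * (if z \<ge> 0 then 1 else 0)"

definition ind :: "bool \<Rightarrow> real" where
  "ind b = (if b then 1 else 0)"

definition net :: "nat \<Rightarrow> (nat \<Rightarrow> real) \<Rightarrow> (nat \<Rightarrow> 'a::euclidean_space) \<Rightarrow> 'a \<Rightarrow> real" where
  "net m a W z = (1 / sqrt (real m)) * (\<Sum>r<m. a r * relu (inner (W r) z))"

definition loss_grad ::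
  "nat \<Rightarrow> nat \<Rightarrow> (nat \<Rightarrow> 'a::euclidean_space) \<Rightarrow> (nat \<Rightarrow> real) \<Rightarrow> (nat \<Rightarrow> real)
    \<Rightarrow> (nat \<Rightarrow> 'a) \<Rightarrow> nat \<Rightarrow> 'a" where
  "loss_grad n m x y a W r =
     (1 / sqrt (real m)) *\<^sub>R
       (\<Sum>i<n. ((net m a W (x i) - y i) * a r * ind (inner (W r) (x i) \<ge> 0)) *\<^sub>R x i)"

text \<open>Gradient descent with Polyak's momentum, started at W0, with w_{-1} := w_0.
  Hence w_1 = w_0 - eta grad(w_0) and w_{t+2} = w_{t+1} - eta grad(w_{t+1}) + beta (w_{t+1} - w_t).\<close>
fun hb_iter ::
  "nat \<Rightarrow> nat \<Rightarrow> (nat \<Rightarrow> 'a::euclidean_space) \<Rightarrow> (nat \<Rightarrow> real) \<Rightarrow> (nat \<Rightarrow> real)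
    \<Rightarrow> real \<Rightarrow> real \<Rightarrow> (nat \<Rightarrow> 'a) \<Rightarrow> nat \<Rightarrow> (nat \<Rightarrow> 'a)" where
  "hb_iter n m x y a \<eta> \<beta> W0 0 = W0"
| "hb_iter n m x y a \<eta> \<beta> W0 (Suc 0) =
     (\<lambda>r. W0 r - \<eta> *\<^sub>R loss_grad n m x y a W0 r)"
| "hb_iter n m x y a \<eta> \<beta> W0 (Suc (Suc t)) =
     (let W1 = hb_iter n m x y a \<eta> \<beta> W0 (Suc t); W2 = hb_iter n m x y a \<eta> \<beta> W0 t
      in (\<lambda>r. W1 r - \<eta> *\<^sub>R loss_grad n m x y a W1 r + \<beta> *\<^sub>R (W1 r - W2 r)))"

definition Hmat :: "nat \<Rightarrow> (nat \<Rightarrow> 'a::euclidean_space) \<Rightarrow> (nat \<Rightarrow> 'a) \<Rightarrow> nat \<Rightarrow> nat \<Rightarrow> real" where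
  "Hmat m x W i j = (1 / real m) *
     (\<Sum>r<m. inner (x i) (x j) * ind (inner (W r) (x i) \<ge> 0 \<and> inner (W r) (x j) \<ge> 0))"

text \<open>Euclidean norm of a vector in R^n represented as a function on {0..<n}.\<close>
definition vnorm :: "nat \<Rightarrow> (nat \<Rightarrow> real) \<Rightarrow> real" where
  "vnorm n v = sqrt (\<Sum>i<n. (v i)\<^sup>2)"

definition A_event :: "real \<Rightarrow> (nat \<Rightarrow> 'a::euclidean_space) \<Rightarrow> (nat \<Rightarrow> 'a) \<Rightarrow> nat \<Rightarrow> nat \<Rightarrow> bool" where
  "A_event R x W0 i r \<longleftrightarrow>
     (\<exists>w. norm (w - W0 r) \<le> R \<and> ((inner (x i) (W0 r) \<ge> 0) \<noteq> (inner (x i) w \<ge> 0)))"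

definition S_set :: "nat \<Rightarrow> real \<Rightarrow> (nat \<Rightarrow> 'a::euclidean_space) \<Rightarrow> (nat \<Rightarrow> 'a) \<Rightarrow> nat \<Rightarrow> nat set" where
  "S_set m R x W0 i = {r. r < m \<and> \<not> A_event R x W0 i r}"

definition S_perp :: "nat \<Rightarrow> real \<Rightarrow> (nat \<Rightarrow> 'a::euclidean_space) \<Rightarrow> (nat \<Rightarrow> 'a) \<Rightarrow> nat \<Rightarrow> nat set" where
  "S_perp m R x W0 i = {..<m} - S_set m R x W0 i"

end

theory Submission
  imports Defs
begin

text \<open>Write \<open>\<phi>\<^sub>t[i]\<close> as a sum over neurons of \<open>a\<^sub>r/\<surd>m\<close> times a scalar residual built from the
  pre-activations \<open>\<langle>w\<^sub>s\<^sup>r, x\<^sub>i\<rangle>\<close> at times \<open>t+1, t, t-1\<close>. For \<open>r \<in> S\<^sub>i\<close> all three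
  pre-activations share the sign of \<open>\<langle>w\<^sub>0\<^sup>r, x\<^sub>i\<rangle>\<close>, so ReLU acts linearly on them and the
  momentum recursion makes the residual vanish. For \<open>r \<in> S\<^sub>i\<^sup>\<bottom>\<close> the residual is bounded by
  the weight increments and the gradient, and unrolling the momentum recursion bounds
  the increments by \<open>\<eta>\<surd>(n/m)\<close> times the momentum-weighted sum of past errors.\<close>

definition momentum_sum :: "real \<Rightarrow> (nat \<Rightarrow> real) \<Rightarrow> nat \<Rightarrow> real" where
  "momentum_sum \<beta> v t = (\<Sum>s<t. \<beta> ^ (t - 1 - s) * v s)"

lemma momentum_sum_0 [simp]: "momentum_sum \<beta> v 0 = 0"
  by (simp add: momentum_sum_def)

lemma momentum_sum_Suc: "momentum_sum \<beta> v (Suc t) = v t + \<beta> * momentum_sum \<beta> v t"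
proof -
  have "(\<Sum>s<t. \<beta> ^ (t - s) * v s) = (\<Sum>s<t. \<beta> * (\<beta> ^ (t - 1 - s) * v s))"
  proof (rule sum.cong)
    fix s assume "s \<in> {..<t}"
    then have "t - s = Suc (t - 1 - s)" by auto
    then show "\<beta> ^ (t - s) * v s = \<beta> * (\<beta> ^ (t - 1 - s) * v s)" by simp
  qed simp
  then show ?thesis by (simp add: momentum_sum_def sum_distrib_left)
qed

text \<open>At \<open>s = 0\<close> the truncated \<open>s - 1\<close> makes the momentum term vanish, which encodes
  the convention \<open>w\<^sub>-\<^sub>1 = w\<^sub>0\<close>.\<close>
lemma heavy_ball_increment_le:
  fixes w g :: "nat \<Rightarrow> 'a::real_normed_vector"
  assumes step: "\<And>s. w (Suc s) = w s - \<eta> *\<^sub>R g s + \<beta> *\<^sub>R (w s - w (s - 1))"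
    and grad: "\<And>s. norm (g s) \<le> c * v s"
    and "0 \<le> \<eta>" "0 \<le> \<beta>"
  shows "norm (w (Suc s) - w s) \<le> \<eta> * c * (v s + \<beta> * momentum_sum \<beta> v s)"
proof (induction s)
  case 0
  have "norm (w (Suc 0) - w 0) = \<eta> * norm (g 0)"
    using step[of 0] \<open>0 \<le> \<eta>\<close> by simp
  also have "\<dots> \<le> \<eta> * (c * v 0)"
    using grad \<open>0 \<le> \<eta>\<close> by (rule mult_left_mono)
  finally show ?case by simp
next
  case (Suc s)
  have "w (Suc (Suc s)) - w (Suc s) = \<beta> *\<^sub>R (w (Suc s) - w s) - \<eta> *\<^sub>R g (Suc s)"
    using step[of "Suc s"] by simp
  then have "norm (w (Suc (Suc s)) - w (Suc s))
      \<le> \<beta> * norm (w (Suc s) - w s) + \<eta> * norm (g (Suc s))"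
    using norm_triangle_ineq4 assms(3,4) by (metis abs_of_nonneg norm_scaleR)
  also have "\<dots> \<le> \<beta> * (\<eta> * c * (v s + \<beta> * momentum_sum \<beta> v s)) + \<eta> * (c * v (Suc s))"
    by (intro add_mono mult_left_mono Suc.IH grad) (use assms(3,4) in auto)
  also have "\<dots> = \<eta> * c * (v (Suc s) + \<beta> * momentum_sum \<beta> v (Suc s))"
    by (simp add: momentum_sum_Suc algebra_simps)
  finally show ?case .
qed

lemma heavy_ball_increment_prev_le:
  fixes w g :: "nat \<Rightarrow> 'a::real_normed_vector"
  assumes "\<And>s. w (Suc s) = w s - \<eta> *\<^sub>R g s + \<beta> *\<^sub>R (w s - w (s - 1))"
    and "\<And>s. norm (g s) \<le> c * v s"
    and "0 \<le> \<eta>" "0 \<le> \<beta>"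
  shows "norm (w t - w (t - 1)) \<le> \<eta> * c * momentum_sum \<beta> v t"
proof (cases t)
  case (Suc s)
  then show ?thesis
    using heavy_ball_increment_le[OF assms, of s] by (simp add: momentum_sum_Suc)
qed simp

lemma hb_iter_Suc:
  "hb_iter n m x y a \<eta> \<beta> W0 (Suc s) r =
     hb_iter n m x y a \<eta> \<beta> W0 s r - \<eta> *\<^sub>R loss_grad n m x y a (hb_iter n m x y a \<eta> \<beta> W0 s) r
     + \<beta> *\<^sub>R (hb_iter n m x y a \<eta> \<beta> W0 s r - hb_iter n m x y a \<eta> \<beta> W0 (s - 1) r)"
  by (cases s) (simp_all add: Let_def)

lemma sum_abs_le_sqrt_vnorm: "(\<Sum>j<n. \<bar>v j\<bar>) \<le> sqrt (real n) * vnorm n v"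
proof -
  have "(\<Sum>j<n. \<bar>v j\<bar>)\<^sup>2 \<le> (\<Sum>j<n. (v j)\<^sup>2) * real n"
    using sum_squared_le_sum_of_squares[of "\<lambda>j. \<bar>v j\<bar>" "{..<n}"] by simp
  then have "(\<Sum>j<n. \<bar>v j\<bar>) \<le> sqrt ((\<Sum>j<n. (v j)\<^sup>2) * real n)"
    by (rule real_le_rsqrt)
  then show ?thesis by (simp add: vnorm_def real_sqrt_mult mult.commute)
qed

lemma norm_loss_grad_le:
  fixes x :: "nat \<Rightarrow> 'a::euclidean_space"
  assumes x_norm: "\<forall>j<n. norm (x j) \<le> 1" and "\<bar>a r\<bar> \<le> 1"
  shows "norm (loss_grad n m x y a W r)
    \<le> sqrt (real n) / sqrt (real m) * vnorm n (\<lambda>j. net m a W (x j) - y j)"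
proof -
  let ?e = "\<lambda>j. net m a W (x j) - y j"
  have "norm (\<Sum>j<n. (?e j * a r * ind (inner (W r) (x j) \<ge> 0)) *\<^sub>R x j)
      \<le> (\<Sum>j<n. norm ((?e j * a r * ind (inner (W r) (x j) \<ge> 0)) *\<^sub>R x j))"
    by (rule norm_sum)
  also have "\<dots> \<le> (\<Sum>j<n. \<bar>?e j\<bar> * 1 * 1 * 1)"
    unfolding norm_scaleR abs_mult
    by (intro sum_mono mult_mono) (use x_norm assms(2) in \<open>auto simp: ind_def\<close>)
  also have "\<dots> \<le> sqrt (real n) * vnorm n ?e"
    using sum_abs_le_sqrt_vnorm by simp
  finally show ?thesis
    unfolding loss_grad_def by (simp add: divide_right_mono)
qed

text \<open>The Gram matrix \<open>H\<^sub>W\<close> applied to the error is the gradient step seen from \<open>x\<^sub>i\<close>: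
  \<open>a\<^sub>r\<^sup>2 = 1\<close> cancels the two output weights and \<open>\<surd>m \<cdot> \<surd>m\<close> gives the factor \<open>1/m\<close>.\<close>
lemma Hmat_mult_error_eq:
  fixes x :: "nat \<Rightarrow> 'a::euclidean_space"
  assumes "m > 0" and a_sign: "\<forall>r<m. a r = 1 \<or> a r = -1"
  shows "(\<Sum>j<n. Hmat m x W i j * (net m a W (x j) - y j))
    = (\<Sum>r<m. a r / sqrt (real m) * ind (inner (W r) (x i) \<ge> 0)
                * inner (loss_grad n m x y a W r) (x i))"
proof -
  let ?e = "\<lambda>j. net m a W (x j) - y j"
  let ?h = "\<lambda>r j. 1 / real m * (inner (x i) (x j)
               * ind (inner (W r) (x i) \<ge> 0 \<and> inner (W r) (x j) \<ge> 0)) * ?e j"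
  have sm: "sqrt (real m) * sqrt (real m) = real m" using \<open>m > 0\<close> by simp
  have neuron: "a r / sqrt (real m) * ind (inner (W r) (x i) \<ge> 0)
      * inner (loss_grad n m x y a W r) (x i) = (\<Sum>j<n. ?h r j)" if "r < m" for r
  proof -
    have aa: "a r * a r = 1" using a_sign that by auto
    have "a r / sqrt (real m) * ind (inner (W r) (x i) \<ge> 0)
        * inner (loss_grad n m x y a W r) (x i)
      = (\<Sum>j<n. (a r * a r) / (sqrt (real m) * sqrt (real m)) * inner (x i) (x j)
           * (ind (inner (W r) (x i) \<ge> 0) * ind (inner (W r) (x j) \<ge> 0)) * ?e j)"
      unfolding loss_grad_def inner_scaleR_left inner_sum_left sum_distrib_left
      by (intro sum.cong) (simp_all add: inner_commute)
    also have "\<dots> = (\<Sum>j<n. ?h r j)"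
      unfolding aa sm by (intro sum.cong) (simp_all add: ind_def)
    finally show ?thesis .
  qed
  have "(\<Sum>r<m. a r / sqrt (real m) * ind (inner (W r) (x i) \<ge> 0)
           * inner (loss_grad n m x y a W r) (x i)) = (\<Sum>r<m. \<Sum>j<n. ?h r j)"
    using neuron by (intro sum.cong) simp_all
  also have "\<dots> = (\<Sum>j<n. \<Sum>r<m. ?h r j)"
    by (rule sum.swap)
  also have "\<dots> = (\<Sum>j<n. Hmat m x W i j * ?e j)"
    by (simp add: Hmat_def sum_distrib_left sum_distrib_right)
  finally show ?thesis by simp
qed

text \<open>\<open>h\<^sub>1, h\<^sub>0, h\<^sub>p\<close> stand for the pre-activations of a neuron on \<open>x\<^sub>i\<close> at times \<open>t+1, t, t-1\<close>
  and \<open>g\<close> for \<open>\<langle>\<partial>\<^sub>r\<ell>(W\<^sub>t), x\<^sub>i\<rangle>\<close>.\<close>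
definition relu_residual :: "real \<Rightarrow> real \<Rightarrow> real \<Rightarrow> real \<Rightarrow> real \<Rightarrow> real \<Rightarrow> real" where
  "relu_residual \<eta> \<beta> h\<^sub>1 h\<^sub>0 h\<^sub>p g =
     relu h\<^sub>1 - (1 + \<beta>) * relu h\<^sub>0 + \<beta> * relu h\<^sub>p + \<eta> * ind (h\<^sub>0 \<ge> 0) * g"

lemma relu_residual_eq_0:
  assumes "h\<^sub>1 = h\<^sub>0 - \<eta> * g + \<beta> * (h\<^sub>0 - h\<^sub>p)"
    and "(h\<^sub>1 \<ge> 0) = (h\<^sub>0 \<ge> 0)" "(h\<^sub>p \<ge> 0) = (h\<^sub>0 \<ge> 0)"
  shows "relu_residual \<eta> \<beta> h\<^sub>1 h\<^sub>0 h\<^sub>p g = 0"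
  using assms by (auto simp: relu_residual_def relu_def ind_def algebra_simps)

lemma abs_relu_residual_le:
  assumes "0 \<le> \<eta>" "0 \<le> \<beta>"
  shows "\<bar>relu_residual \<eta> \<beta> h\<^sub>1 h\<^sub>0 h\<^sub>p g\<bar> \<le> \<bar>h\<^sub>1 - h\<^sub>0\<bar> + \<beta> * \<bar>h\<^sub>0 - h\<^sub>p\<bar> + \<eta> * \<bar>g\<bar>"
proof -
  have relu_lip: "\<bar>relu u - relu u'\<bar> \<le> \<bar>u - u'\<bar>" for u u'
    by (simp add: relu_def)
  have "relu_residual \<eta> \<beta> h\<^sub>1 h\<^sub>0 h\<^sub>p g
      = (relu h\<^sub>1 - relu h\<^sub>0) - \<beta> * (relu h\<^sub>0 - relu h\<^sub>p) + \<eta> * ind (h\<^sub>0 \<ge> 0) * g"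
    by (simp add: relu_residual_def algebra_simps)
  moreover have "\<bar>\<beta> * (relu h\<^sub>0 - relu h\<^sub>p)\<bar> \<le> \<beta> * \<bar>h\<^sub>0 - h\<^sub>p\<bar>"
    using relu_lip \<open>0 \<le> \<beta>\<close> by (simp add: abs_mult mult_left_mono)
  moreover have "\<bar>\<eta> * ind (h\<^sub>0 \<ge> 0) * g\<bar> \<le> \<eta> * \<bar>g\<bar>"
    using \<open>0 \<le> \<eta>\<close> by (simp add: abs_mult ind_def)
  ultimately show ?thesis
    using relu_lip[of h\<^sub>1 h\<^sub>0] by linarith
qed

lemma net_eq_sum: "net m a W z = (\<Sum>r<m. a r / sqrt (real m) * relu (inner (W r) z))"
  by (simp add: net_def sum_distrib_left)

lemma momentum_residual_eq_sum:
  fixes x :: "nat \<Rightarrow> 'a::euclidean_space"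
  assumes "m > 0" and "\<forall>r<m. a r = 1 \<or> a r = -1"
  shows "(net m a W\<^sub>1 (x i) - y i) - (1 + \<beta>) * (net m a W (x i) - y i)
      + \<beta> * (net m a W\<^sub>p (x i) - y i)
      + \<eta> * (\<Sum>j<n. Hmat m x W i j * (net m a W (x j) - y j))
    = (\<Sum>r<m. a r / sqrt (real m) * relu_residual \<eta> \<beta> (inner (W\<^sub>1 r) (x i))
         (inner (W r) (x i)) (inner (W\<^sub>p r) (x i)) (inner (loss_grad n m x y a W r) (x i)))"
proof -
  let ?S = "\<lambda>V. \<Sum>r<m. a r / sqrt (real m) * relu (inner (V r) (x i))"
  have "(\<Sum>r<m. a r / sqrt (real m) * relu_residual \<eta> \<beta> (inner (W\<^sub>1 r) (x i))
         (inner (W r) (x i)) (inner (W\<^sub>p r) (x i)) (inner (loss_grad n m x y a W r) (x i)))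
      = ?S W\<^sub>1 - (1 + \<beta>) * ?S W + \<beta> * ?S W\<^sub>p
        + \<eta> * (\<Sum>r<m. a r / sqrt (real m) * ind (inner (W r) (x i) \<ge> 0)
                * inner (loss_grad n m x y a W r) (x i))"
    unfolding relu_residual_def distrib_left right_diff_distrib mult.left_commute[of "a _ / _"]
      sum.distrib sum_subtractf sum_distrib_left[symmetric] by (simp add: sum_distrib_left mult_ac)
  then show ?thesis
    unfolding Hmat_mult_error_eq[OF assms] by (simp add: net_eq_sum algebra_simps)
qed

lemma abs_relu_residual_inner_le:
  fixes w\<^sub>1 w\<^sub>0 w\<^sub>p g z :: "'a::real_inner"
  assumes "norm z \<le> 1" "0 \<le> \<eta>" "0 \<le> \<beta>"
  shows "\<bar>relu_residual \<eta> \<beta> (inner w\<^sub>1 z) (inner w\<^sub>0 z) (inner w\<^sub>p z) (inner g z)\<bar>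
    \<le> norm (w\<^sub>1 - w\<^sub>0) + \<beta> * norm (w\<^sub>0 - w\<^sub>p) + \<eta> * norm g"
proof -
  have abs_inner_le: "\<bar>inner u z\<bar> \<le> norm u" for u
    using Cauchy_Schwarz_ineq2[of u z] mult_left_le[OF assms(1), of "norm u"] by simp
  have "\<bar>relu_residual \<eta> \<beta> (inner w\<^sub>1 z) (inner w\<^sub>0 z) (inner w\<^sub>p z) (inner g z)\<bar>
      \<le> \<bar>inner w\<^sub>1 z - inner w\<^sub>0 z\<bar> + \<beta> * \<bar>inner w\<^sub>0 z - inner w\<^sub>p z\<bar> + \<eta> * \<bar>inner g z\<bar>"
    using assms(2,3) by (rule abs_relu_residual_le)
  also have "\<dots> \<le> norm (w\<^sub>1 - w\<^sub>0) + \<beta> * norm (w\<^sub>0 - w\<^sub>p) + \<eta> * norm g"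
    unfolding inner_diff_left[symmetric]
    by (intro add_mono mult_left_mono abs_inner_le) (use assms in simp_all)
  finally show ?thesis .
qed

lemma S_set_activation_stable:
  assumes "r \<in> S_set m R x W0 i" "norm (w - W0 r) \<le> R"
  shows "(inner w (x i) \<ge> 0) = (inner (W0 r) (x i) \<ge> 0)"
  using assms by (auto simp: S_set_def A_event_def inner_commute)

lemma hb_iter_increment_le:
  fixes n m :: nat and x :: "nat \<Rightarrow> 'a::euclidean_space" and y a :: "nat \<Rightarrow> real"
    and W0 :: "nat \<Rightarrow> 'a" and \<eta> \<beta> :: real
  defines "W \<equiv> hb_iter n m x y a \<eta> \<beta> W0"
  defines "v \<equiv> \<lambda>s. vnorm n (\<lambda>j. net m a (W s) (x j) - y j)"
  assumes "\<forall>j<n. norm (x j) \<le> 1" "\<bar>a r\<bar> \<le> 1" "0 \<le> \<eta>" "0 \<le> \<beta>"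
  shows "norm (W (Suc t) r - W t r)
      \<le> \<eta> * (sqrt (real n) / sqrt (real m)) * (v t + \<beta> * momentum_sum \<beta> v t)"
    and "norm (W t r - W (t - 1) r) \<le> \<eta> * (sqrt (real n) / sqrt (real m)) * momentum_sum \<beta> v t"
proof -
  have step: "W (Suc s) r = W s r - \<eta> *\<^sub>R loss_grad n m x y a (W s) r
      + \<beta> *\<^sub>R (W s r - W (s - 1) r)" for s
    unfolding W_def by (rule hb_iter_Suc)
  have grad: "norm (loss_grad n m x y a (W s) r) \<le> sqrt (real n) / sqrt (real m) * v s" for s
    unfolding v_def using assms(3,4) by (rule norm_loss_grad_le)
  show "norm (W (Suc t) r - W t r)
      \<le> \<eta> * (sqrt (real n) / sqrt (real m)) * (v t + \<beta> * momentum_sum \<beta> v t)"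
    using step grad assms(5,6) by (rule heavy_ball_increment_le)
  show "norm (W t r - W (t - 1) r) \<le> \<eta> * (sqrt (real n) / sqrt (real m)) * momentum_sum \<beta> v t"
    using step grad assms(5,6) by (rule heavy_ball_increment_prev_le)
qed

definition hb_neuron_residual ::
  "nat \<Rightarrow> nat \<Rightarrow> (nat \<Rightarrow> 'a::euclidean_space) \<Rightarrow> (nat \<Rightarrow> real) \<Rightarrow> (nat \<Rightarrow> real)
    \<Rightarrow> real \<Rightarrow> real \<Rightarrow> (nat \<Rightarrow> 'a) \<Rightarrow> nat \<Rightarrow> nat \<Rightarrow> nat \<Rightarrow> real" where
  "hb_neuron_residual n m x y a \<eta> \<beta> W0 t i r =
     (let W = hb_iter n m x y a \<eta> \<beta> W0
      in a r / sqrt (real m) * relu_residual \<eta> \<beta> (inner (W (Suc t) r) (x i))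
           (inner (W t r) (x i)) (inner (W (t - 1) r) (x i))
           (inner (loss_grad n m x y a (W t) r) (x i)))"

lemma hb_residual_eq_sum_neuron_residual:
  fixes n m :: nat and x :: "nat \<Rightarrow> 'a::euclidean_space" and y a :: "nat \<Rightarrow> real"
    and W0 :: "nat \<Rightarrow> 'a" and \<eta> \<beta> :: real
  defines "W \<equiv> hb_iter n m x y a \<eta> \<beta> W0"
  defines "\<xi> \<equiv> \<lambda>s i. net m a (W s) (x i) - y i"
  assumes "m > 0" "\<forall>r<m. a r = 1 \<or> a r = -1"
  shows "\<xi> (t + 1) i - (1 + \<beta>) * \<xi> t i + \<beta> * \<xi> (t - 1) i
      + \<eta> * (\<Sum>j<n. Hmat m x (W t) i j * \<xi> t j)
    = (\<Sum>r<m. hb_neuron_residual n m x y a \<eta> \<beta> W0 t i r)"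
  using momentum_residual_eq_sum[OF assms(3,4), of "W (Suc t)" x i y \<beta> "W t" "W (t - 1)" \<eta> n]
  by (simp add: \<xi>_def hb_neuron_residual_def W_def[symmetric] Let_def)

lemma hb_neuron_residual_eq_0:
  fixes n m :: nat and x :: "nat \<Rightarrow> 'a::euclidean_space" and y a :: "nat \<Rightarrow> real"
    and W0 :: "nat \<Rightarrow> 'a" and \<eta> \<beta> :: real
  defines "W \<equiv> hb_iter n m x y a \<eta> \<beta> W0"
  assumes "r \<in> S_set m R x W0 i" and "\<forall>s\<le>t + 1. norm (W s r - W0 r) \<le> R"
  shows "hb_neuron_residual n m x y a \<eta> \<beta> W0 t i r = 0"
proof -
  let ?h = "\<lambda>s. inner (W s r) (x i)"
  have sign: "(?h s \<ge> 0) = (inner (W0 r) (x i) \<ge> 0)" if "s \<le> Suc t" for s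
    by (intro S_set_activation_stable[OF assms(2)]) (use assms(3) that in simp)
  have "?h (Suc t) = ?h t - \<eta> * inner (loss_grad n m x y a (W t) r) (x i)
      + \<beta> * (?h t - ?h (t - 1))"
    unfolding W_def hb_iter_Suc by (simp add: inner_diff_left inner_add_left)
  then show ?thesis
    using sign[of "Suc t"] sign[of t] sign[of "t - 1"]
    by (simp add: hb_neuron_residual_def W_def[symmetric] relu_residual_eq_0)
qed

lemma abs_divide_mult_le:
  fixes \<alpha> d u K :: real
  assumes "\<bar>\<alpha>\<bar> \<le> 1" "0 < d" "\<bar>u\<bar> \<le> d * K"
  shows "\<bar>\<alpha> / d * u\<bar> \<le> K"
proof -
  have "\<bar>\<alpha> / d * u\<bar> = \<bar>\<alpha>\<bar> * (\<bar>u\<bar> / d)"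
    using \<open>0 < d\<close> by (simp add: abs_mult)
  also have "\<dots> \<le> \<bar>u\<bar> / d"
    using assms(1,2) by (intro mult_left_le_one_le) auto
  also have "\<dots> \<le> K"
    using assms(2,3) by (simp add: pos_divide_le_eq mult.commute)
  finally show ?thesis .
qed

text \<open>The two weight increments and \<open>\<eta>\<parallel>\<partial>\<^sub>r\<ell>(W\<^sub>t)\<parallel>\<close> add up to twice \<open>\<eta>\<surd>(n/m)\<close> times the
  momentum-weighted error; the output layer contributes another factor \<open>1/\<surd>m\<close>.\<close>
lemma abs_hb_neuron_residual_le:
  fixes n m :: nat and x :: "nat \<Rightarrow> 'a::euclidean_space" and y a :: "nat \<Rightarrow> real"
    and W0 :: "nat \<Rightarrow> 'a" and \<eta> \<beta> :: real
  defines "W \<equiv> hb_iter n m x y a \<eta> \<beta> W0"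
  defines "v \<equiv> \<lambda>s. vnorm n (\<lambda>j. net m a (W s) (x j) - y j)"
  assumes x_norm: "\<forall>j<n. norm (x j) \<le> 1" and "i < n" and a_le: "\<bar>a r\<bar> \<le> 1"
    and "m > 0" "0 \<le> \<eta>" "0 \<le> \<beta>"
  shows "\<bar>hb_neuron_residual n m x y a \<eta> \<beta> W0 t i r\<bar>
    \<le> 2 * \<eta> * sqrt (real n) / real m * (v t + \<beta> * momentum_sum \<beta> v t)"
proof -
  define c where "c = sqrt (real n) / sqrt (real m)"
  let ?G = "loss_grad n m x y a (W t) r"
  let ?K = "2 * \<eta> * (c / sqrt (real m)) * (v t + \<beta> * momentum_sum \<beta> v t)"
  have incr: "norm (W (Suc t) r - W t r) \<le> \<eta> * c * (v t + \<beta> * momentum_sum \<beta> v t)"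
    and incr_prev: "norm (W t r - W (t - 1) r) \<le> \<eta> * c * momentum_sum \<beta> v t"
    unfolding W_def v_def c_def using x_norm a_le assms(7,8) by (rule hb_iter_increment_le)+
  have grad: "norm ?G \<le> c * v t"
    unfolding v_def c_def using x_norm a_le by (rule norm_loss_grad_le)
  have "\<bar>relu_residual \<eta> \<beta> (inner (W (Suc t) r) (x i)) (inner (W t r) (x i))
           (inner (W (t - 1) r) (x i)) (inner ?G (x i))\<bar>
      \<le> norm (W (Suc t) r - W t r) + \<beta> * norm (W t r - W (t - 1) r) + \<eta> * norm ?G"
    using x_norm assms(4,7,8) by (intro abs_relu_residual_inner_le) simp_all
  also have "\<dots> \<le> \<eta> * c * (v t + \<beta> * momentum_sum \<beta> v t)
      + \<beta> * (\<eta> * c * momentum_sum \<beta> v t) + \<eta> * (c * v t)"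
    by (intro add_mono mult_left_mono incr incr_prev grad) (use assms(7,8) in auto)
  also have "\<dots> = sqrt (real m) * ?K"
    using \<open>m > 0\<close> by (simp add: field_simps)
  finally have residual_le: "\<bar>relu_residual \<eta> \<beta> (inner (W (Suc t) r) (x i)) (inner (W t r) (x i))
           (inner (W (t - 1) r) (x i)) (inner ?G (x i))\<bar> \<le> sqrt (real m) * ?K" .
  have "\<bar>hb_neuron_residual n m x y a \<eta> \<beta> W0 t i r\<bar> \<le> ?K"
    unfolding hb_neuron_residual_def W_def[symmetric] Let_def
    using a_le \<open>m > 0\<close> residual_le by (intro abs_divide_mult_le) simp_all
  also have "?K = 2 * \<eta> * sqrt (real n) / real m * (v t + \<beta> * momentum_sum \<beta> v t)"
    using \<open>m > 0\<close> by (simp add: c_def divide_divide_eq_left)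
  finally show ?thesis .
qed

lemma abs_sum_le_card_mul:
  assumes "finite A" "B \<subseteq> A" "\<And>r. r \<in> A - B \<Longrightarrow> f r = 0" "\<And>r. r \<in> B \<Longrightarrow> \<bar>f r\<bar> \<le> K"
  shows "\<bar>sum f A\<bar> \<le> real (card B) * K"
proof -
  have "\<bar>sum f A\<bar> = \<bar>sum f B\<bar>"
    using assms(1-3) by (simp add: sum.mono_neutral_right)
  also have "\<dots> \<le> (\<Sum>r\<in>B. \<bar>f r\<bar>)"
    by (rule sum_abs)
  also have "\<dots> \<le> real (card B) * K"
    using assms(4) by (rule sum_bounded_above)
  finally show ?thesis .
qed

theorem lemma3:
  fixes n m :: nat and x :: "nat \<Rightarrow> 'a::euclidean_space" and y a :: "nat \<Rightarrow> real"
    and W0 :: "nat \<Rightarrow> 'a" and \<eta> \<beta> R :: real and t :: nat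
  defines "W \<equiv> hb_iter n m x y a \<eta> \<beta> W0"
  defines "\<xi> \<equiv> (\<lambda>s i. net m a (W s) (x i) - y i)"
  assumes m_pos: "m > 0"
    and x_norm: "\<forall>i<n. norm (x i) \<le> 1"
    and a_sign: "\<forall>r<m. a r = 1 \<or> a r = -1"
    and eta_pos: "\<eta> > 0"
    and beta_range: "0 \<le> \<beta>" "\<beta> \<le> 1"
    and R_pos: "R > 0"
    and stay_close: "\<forall>r<m. \<forall>s\<le>t+1. norm (W s r - W 0 r) \<le> R"
  shows "\<forall>i<n.
    \<bar>\<xi> (t+1) i - (1 + \<beta>) * \<xi> t i + \<beta> * \<xi> (t-1) i
      + \<eta> * (\<Sum>j<n. Hmat m x (W t) i j * \<xi> t j)\<bar>
    \<le> 2 * \<eta> * sqrt (real n) * real (card (S_perp m R x W0 i)) / real m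
       * (vnorm n (\<xi> t) + \<beta> * (\<Sum>s<t. \<beta> ^ (t - 1 - s) * vnorm n (\<xi> s)))"
proof -
  have "\<bar>\<xi> (t+1) i - (1 + \<beta>) * \<xi> t i + \<beta> * \<xi> (t-1) i
      + \<eta> * (\<Sum>j<n. Hmat m x (W t) i j * \<xi> t j)\<bar>
    \<le> 2 * \<eta> * sqrt (real n) * real (card (S_perp m R x W0 i)) / real m
       * (vnorm n (\<xi> t) + \<beta> * (\<Sum>s<t. \<beta> ^ (t - 1 - s) * vnorm n (\<xi> s)))"
    if "i < n" for i
  proof -
    define v where "v = (\<lambda>s. vnorm n (\<xi> s))"
    let ?\<rho> = "hb_neuron_residual n m x y a \<eta> \<beta> W0 t i"
    have "\<bar>\<Sum>r<m. ?\<rho> r\<bar> \<le> real (card (S_perp m R x W0 i))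
        * (2 * \<eta> * sqrt (real n) / real m * (v t + \<beta> * momentum_sum \<beta> v t))"
    proof (rule abs_sum_le_card_mul)
      fix r assume "r \<in> {..<m} - S_perp m R x W0 i"
      then have stable: "r \<in> S_set m R x W0 i" and "r < m"
        by (auto simp: S_perp_def)
      have "\<forall>s\<le>t + 1. norm (W s r - W0 r) \<le> R"
        using stay_close \<open>r < m\<close> by (simp add: W_def)
      with stable show "?\<rho> r = 0"
        unfolding W_def by (rule hb_neuron_residual_eq_0)
    next
      fix r assume "r \<in> S_perp m R x W0 i"
      then have "\<bar>a r\<bar> \<le> 1"
        using a_sign by (auto simp: S_perp_def)
      from abs_hb_neuron_residual_le[where a = a and r = r, OF x_norm \<open>i < n\<close> this m_pos
          less_imp_le[OF eta_pos] beta_range(1)]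
      show "\<bar>?\<rho> r\<bar> \<le> 2 * \<eta> * sqrt (real n) / real m * (v t + \<beta> * momentum_sum \<beta> v t)"
        by (simp add: v_def \<xi>_def W_def)
    qed (auto simp: S_perp_def)
    then show ?thesis
      unfolding W_def \<xi>_def hb_residual_eq_sum_neuron_residual[OF m_pos a_sign]
      by (simp add: v_def \<xi>_def W_def momentum_sum_def algebra_simps)
  qed
  then show ?thesis by blast
qed

end
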